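(* Let $\mathfrak q$ be a Morse quasi-geodesic in a CAT(0) metric space $(X,\mathrm{dist})$. Then the divergence of $\mathfrak q$ satisfies $\mathrm{Div}^{\mathfrak q}\succeq x^2$, i.e. $x^2\preceq \mathrm{Div}^{\mathfrak q}_\gamma(x)$.
   Context: A $(L,C)$-quasi-geodesic is a map $q$ from a connected subset of $\mathbb R$ to $X$ with $\frac1L|s-t|-C\le\mathrm{dist}(q(s),q(t))\le L|s-t|+C$. A bi-infinite quasi-geodesic $\mathfrak q:\mathbb R\to X$ is Morse if for all $L\ge1,C\ge0$ there is $M=M(L,C)$ such that every $(L,C)$-quasi-geodesic with endpoints on $\mathfrak q$ lies in the $M$-neighborhood of $\mathfrak q$. Divergence of a quasi-geodesic: for fixed $\delta\in(0,1)$, $\gamma\ge0$ and $a,b,c\in X$ with $r=\mathrm{dist}(c,\{a,b\})>0$, $\mathrm{div}_\gamma(a,b,c;\delta)$ is the infimum of lengths of paths joining $a,b$ and avoiding the open ball $B(c,\delta r-\gamma)$; $\mathrm{Div}^{\mathfrak q}_\gamma(r)=\mathrm{div}_\gamma(\mathfrak q(r),\mathfrak q(-r),\mathfrak q(0);\delta)$. Order: $f\preceq g$ if there is $C\ge1$ with $f(x)\le Cg(Cx+C)+Cx+C$ for all $x\ge0$; $g\succeq f$ means $f\preceq g$. *)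

theory Defs
  imports "HOL-Analysis.Analysis" "HOL-Library.Extended_Real"
begin

definition geodesic_seg :: "(real \<Rightarrow> 'a::metric_space) \<Rightarrow> 'a \<Rightarrow> 'a \<Rightarrow> bool" where
  "geodesic_seg g x y \<longleftrightarrow> g 0 = x \<and> g (dist x y) = y \<and>
     (\<forall>s\<in>{0..dist x y}. \<forall>t\<in>{0..dist x y}. dist (g s) (g t) = \<bar>s - t\<bar>)"

definition geodesic_space :: "'a::metric_space itself \<Rightarrow> bool" where
  "geodesic_space TYPE('a) \<longleftrightarrow> (\<forall>x y :: 'a. \<exists>g. geodesic_seg g x y)"

text \<open>Pairs (point on the side [a,b] given by geodesic g, corresponding point on the
  side [a',b'] of the Euclidean comparison triangle in the plane (= complex numbers)).\<close>
definition side_pairs :: "(real \<Rightarrow> 'a::metric_space) \<Rightarrow> 'a \<Rightarrow> 'a \<Rightarrow> complex \<Rightarrow> complex \<Rightarrow> ('a \<times> complex) set" where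
  "side_pairs g a b a' b' =
     {(g s, a' + complex_of_real (s / dist a b) * (b' - a')) | s. s \<in> {0..dist a b}}"

definition CAT0_space :: "'a::metric_space itself \<Rightarrow> bool" where
  "CAT0_space TYPE('a) \<longleftrightarrow> geodesic_space TYPE('a) \<and>
    (\<forall>x y z :: 'a. \<forall>g h k. geodesic_seg g x y \<and> geodesic_seg h y z \<and> geodesic_seg k z x \<longrightarrow>
      (\<forall>x' y' z' :: complex. dist x' y' = dist x y \<and> dist y' z' = dist y z \<and> dist z' x' = dist z x \<longrightarrow>
        (let S = side_pairs g x y x' y' \<union> side_pairs h y z y' z' \<union> side_pairs k z x z' x' in
          \<forall>(p, p') \<in> S. \<forall>(r, r') \<in> S. dist p r \<le> dist p' r')))"

definition quasi_geodesic :: "real \<Rightarrow> real \<Rightarrow> real set \<Rightarrow> (real \<Rightarrow> 'a::metric_space) \<Rightarrow> bool" where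
  "quasi_geodesic L C I p \<longleftrightarrow> L \<ge> 1 \<and> C \<ge> 0 \<and> connected I \<and>
     (\<forall>s\<in>I. \<forall>t\<in>I. \<bar>s - t\<bar> / L - C \<le> dist (p s) (p t) \<and> dist (p s) (p t) \<le> L * \<bar>s - t\<bar> + C)"

definition morse_quasi_geodesic :: "(real \<Rightarrow> 'a::metric_space) \<Rightarrow> bool" where
  "morse_quasi_geodesic q \<longleftrightarrow> (\<exists>L0 C0. quasi_geodesic L0 C0 UNIV q) \<and>
     (\<forall>L\<ge>1. \<forall>C\<ge>0. \<exists>M. \<forall>a b p. a \<le> b \<longrightarrow> quasi_geodesic L C {a..b} p \<longrightarrow>
        p a \<in> range q \<longrightarrow> p b \<in> range q \<longrightarrow>
        (\<forall>t\<in>{a..b}. \<exists>s. dist (p t) (q s) \<le> M))"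

definition path_length :: "(real \<Rightarrow> 'a::metric_space) \<Rightarrow> ereal" where
  "path_length p = (SUP (n, t) \<in> {(n, t). t 0 = 0 \<and> t n = (1::real) \<and> (\<forall>i<n. t i \<le> t (Suc i))}.
       ereal (\<Sum>i<n. dist (p (t i)) (p (t (Suc i)))))"

text \<open>div_gamma(a,b,c;delta): infimum of lengths of paths from a to b avoiding the open ball
  B(c, delta r - gamma), r = dist(c,{a,b}). (Infimum of the empty set is \<infinity>.)\<close>
definition divg :: "real \<Rightarrow> real \<Rightarrow> 'a::metric_space \<Rightarrow> 'a \<Rightarrow> 'a \<Rightarrow> ereal" where
  "divg \<gamma> \<delta> a b c =
     (let r = min (dist c a) (dist c b) in
       Inf {path_length p | p. continuous_on {0..1} p \<and> p 0 = a \<and> p 1 = b \<and>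
              p ` {0..1} \<inter> ball c (\<delta> * r - \<gamma>) = {}})"

definition Div :: "(real \<Rightarrow> 'a::metric_space) \<Rightarrow> real \<Rightarrow> real \<Rightarrow> real \<Rightarrow> ereal" where
  "Div q \<gamma> \<delta> r = divg \<gamma> \<delta> (q r) (q (- r)) (q 0)"

definition preceq :: "(real \<Rightarrow> ereal) \<Rightarrow> (real \<Rightarrow> ereal) \<Rightarrow> bool" where
  "preceq f g \<longleftrightarrow> (\<exists>C::real\<ge>1. \<forall>x\<ge>0.
      f x \<le> ereal C * g (C * x + C) + ereal (C * x + C))"

end

theory Submission
  imports Defs
begin

text \<open>
  Let \<open>\<sigma>\<close> be the geodesic from \<open>q r\<close> to \<open>q (-r)\<close>. By the Morse property \<open>\<sigma>\<close> and
  \<open>q\<close> restricted to \<open>[-r, r]\<close> stay within bounded distance of each other, so \<open>q 0\<close> is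
  close to some point \<open>\<sigma> m\<close>. In a CAT(0) space the nearest-point projection onto \<open>\<sigma>\<close> and
  the distance to \<open>\<sigma>\<close> are 1-Lipschitz. Fix a large constant \<open>gap\<close>. If a point \<open>x\<close> far
  from \<open>\<sigma>\<close> and a point \<open>y\<close> with \<open>dist x y\<close> small compared to that distance had feet at
  least \<open>gap\<close> apart, then the path following \<open>\<sigma>\<close>, climbing at the foot of \<open>x\<close> to height
  \<open>gap / 4\<close>, crossing over and descending at the foot of \<open>y\<close> would be a (4, 1)-quasi-geodesic,
  so its top would be close to \<open>q\<close>; this is impossible. A path from \<open>q r\<close> to \<open>q (-r)\<close>
  avoiding the ball of radius \<open>\<rho> \<sim> r\<close> about \<open>q 0\<close> has height \<open>\<gtrsim> \<rho>\<close> while its foot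
  sweeps the interval of length \<open>\<sim> \<rho>\<close> around \<open>m\<close>; this takes \<open>\<sim> \<rho> / gap\<close> steps, each of
  length \<open>\<gtrsim> \<rho> / gap\<close>, so its length is \<open>\<gtrsim> r\<^sup>2\<close>.
\<close>

section \<open>Geodesic segments and the CAT(0) inequality\<close>

lemma geodesic_seg_dist:
  assumes "geodesic_seg g x y" "s \<in> {0..dist x y}" "t \<in> {0..dist x y}"
  shows "dist (g s) (g t) = \<bar>s - t\<bar>"
  using assms unfolding geodesic_seg_def by blast

lemma geodesic_seg_start: "geodesic_seg g x y \<Longrightarrow> g 0 = x"
  and geodesic_seg_end: "geodesic_seg g x y \<Longrightarrow> g (dist x y) = y"
  unfolding geodesic_seg_def by blast+

lemma geodesic_seg_dist_start:
  assumes "geodesic_seg g x y" "s \<in> {0..dist x y}"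
  shows "dist x (g s) = s"
  using geodesic_seg_dist[OF assms(1) _ assms(2), of 0] assms
  by (simp add: geodesic_seg_start)

lemma geodesic_seg_dist_end:
  assumes "geodesic_seg g x y" "s \<in> {0..dist x y}"
  shows "dist (g s) y = dist x y - s"
  using geodesic_seg_dist[OF assms, of "dist x y"] assms
  by (simp add: geodesic_seg_end)

lemma geodesic_seg_reverse:
  "geodesic_seg g x y \<Longrightarrow> geodesic_seg (\<lambda>s. g (dist x y - s)) y x"
  unfolding geodesic_seg_def by (auto simp: dist_commute)

lemma geodesic_seg_subsegment:
  assumes g: "geodesic_seg g x y" and t: "t \<in> {0..dist x y}" and u: "u \<in> {0..dist x y}"
  shows "geodesic_seg (\<lambda>s. g (t + s * sgn (u - t))) (g t) (g u)"
  unfolding geodesic_seg_def geodesic_seg_dist[OF g t u]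
proof (intro conjI ballI)
  show "g (t + \<bar>t - u\<bar> * sgn (u - t)) = g u"
    by (cases "t \<le> u") (auto simp: sgn_if)
  fix s s' assume ss: "s \<in> {0..\<bar>t - u\<bar>}" "s' \<in> {0..\<bar>t - u\<bar>}"
  with t u have "t + s * sgn (u - t) \<in> {0..dist x y}" "t + s' * sgn (u - t) \<in> {0..dist x y}"
    by (auto simp: sgn_if)
  from geodesic_seg_dist[OF g this]
  show "dist (g (t + s * sgn (u - t))) (g (t + s' * sgn (u - t))) = \<bar>s - s'\<bar>"
    using ss by (auto simp: sgn_if abs_minus_commute)
qed simp

lemma geodesic_seg_lipschitz: "geodesic_seg g x y \<Longrightarrow> 1-lipschitz_on {0..dist x y} g"
  unfolding lipschitz_on_def by (simp add: geodesic_seg_dist dist_real_def)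

lemma geodesic_seg_continuous: "geodesic_seg g x y \<Longrightarrow> continuous_on {0..dist x y} g"
  by (rule lipschitz_on_continuous_on[OF geodesic_seg_lipschitz])

lemma geodesic_seg_lipschitz_on_affine:
  assumes g: "geodesic_seg g x y" and e: "\<bar>e\<bar> = 1"
    and range: "\<And>s. s \<in> {u..v} \<Longrightarrow> c + e * s \<in> {0..dist x y}"
  shows "1-lipschitz_on {u..v} (\<lambda>s. g (c + e * s))"
proof (rule lipschitz_onI)
  fix s t assume "s \<in> {u..v}" "t \<in> {u..v}"
  then have "dist (g (c + e * s)) (g (c + e * t)) = \<bar>e\<bar> * \<bar>s - t\<bar>"
    using geodesic_seg_dist[OF g range range] by (simp add: abs_mult flip: right_diff_distrib)
  then show "dist (g (c + e * s)) (g (c + e * t)) \<le> 1 * dist s t"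
    using e by (simp add: dist_real_def)
qed simp

lemma geodesic_seg_quasi_geodesic: "geodesic_seg g x y \<Longrightarrow> quasi_geodesic 1 0 {0..dist x y} g"
  unfolding quasi_geodesic_def by (simp add: geodesic_seg_dist)

definition some_geodesic :: "'a::metric_space \<Rightarrow> 'a \<Rightarrow> real \<Rightarrow> 'a" where
  "some_geodesic x y = (SOME g. geodesic_seg g x y)"

lemma CAT0_geodesic_space: "CAT0_space TYPE('a::metric_space) \<Longrightarrow> geodesic_space TYPE('a)"
  unfolding CAT0_space_def by blast

lemma geodesic_seg_some_geodesic:
  assumes "geodesic_space TYPE('a::metric_space)"
  shows "geodesic_seg (some_geodesic (x::'a) y) x y"
  using assms unfolding geodesic_space_def some_geodesic_def by (metis someI_ex)

lemma comparison_triangle_exists: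
  fixes \<alpha> \<beta> \<gamma> :: real
  assumes "0 \<le> \<alpha>" "0 \<le> \<beta>" "0 \<le> \<gamma>" "\<alpha> \<le> \<beta> + \<gamma>" "\<beta> \<le> \<alpha> + \<gamma>" "\<gamma> \<le> \<alpha> + \<beta>"
  shows "\<exists>x' y' z' :: complex. dist x' y' = \<alpha> \<and> dist y' z' = \<beta> \<and> dist z' x' = \<gamma>"
proof (cases "\<alpha> = 0")
  case True
  with assms have "\<beta> = \<gamma>" by auto
  with True assms show ?thesis
    by (intro exI[of _ 0] exI[of _ "complex_of_real \<gamma>"]) (auto simp: dist_norm)
next
  case False
  with assms have \<alpha>: "\<alpha> > 0" by auto
  \<comment> \<open>place the triangle at 0, \<alpha> and A + iB, with A from the law of cosines\<close>
  define A where "A = (\<alpha>\<^sup>2 + \<gamma>\<^sup>2 - \<beta>\<^sup>2) / (2 * \<alpha>)"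
  have "\<beta>\<^sup>2 \<le> (\<alpha> + \<gamma>)\<^sup>2" "\<bar>\<alpha> - \<gamma>\<bar>\<^sup>2 \<le> \<beta>\<^sup>2"
    using assms by (intro power_mono; simp)+
  then have "\<bar>\<alpha>\<^sup>2 + \<gamma>\<^sup>2 - \<beta>\<^sup>2\<bar> \<le> 2 * \<alpha> * \<gamma>"
    by (auto simp: power2_eq_square algebra_simps abs_le_iff)
  with \<alpha> have "\<bar>A\<bar> \<le> \<gamma>"
    unfolding A_def by (auto simp: abs_divide field_simps)
  then have A2: "A\<^sup>2 \<le> \<gamma>\<^sup>2"
    by (metis abs_le_square_iff abs_of_nonneg assms(3))
  define B where "B = sqrt (\<gamma>\<^sup>2 - A\<^sup>2)"
  have B2: "B\<^sup>2 = \<gamma>\<^sup>2 - A\<^sup>2"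
    unfolding B_def using A2 by simp
  have "(cmod (complex_of_real \<alpha> - Complex A B))\<^sup>2 = (\<alpha> - A)\<^sup>2 + B\<^sup>2"
    unfolding cmod_def by (simp add: power2_eq_square)
  also have "\<dots> = \<beta>\<^sup>2"
    using B2 \<alpha> unfolding A_def by (simp add: field_simps power2_eq_square)
  finally have "cmod (complex_of_real \<alpha> - Complex A B) = \<beta>"
    using assms(2) by (metis norm_ge_zero power2_eq_iff_nonneg)
  moreover have "cmod (Complex A B) = \<gamma>"
    unfolding cmod_def using B2 assms by simp
  ultimately show ?thesis using assms
    by (intro exI[of _ 0] exI[of _ "complex_of_real \<alpha>"] exI[of _ "Complex A B"])
       (auto simp: dist_norm norm_minus_commute)
qed

lemma comparison_triangle_of_points:
  fixes x y z :: "'a::metric_space"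
  shows "\<exists>x' y' z' :: complex. dist x' y' = dist x y \<and> dist y' z' = dist y z \<and> dist z' x' = dist z x"
  by (intro comparison_triangle_exists zero_le_dist) (metis dist_commute dist_triangle add.commute)+

lemma side_pairs_memI:
  assumes "geodesic_seg g x y" "dist x' y' = dist x y" "0 \<le> l" "l \<le> 1"
  shows "(g (l * dist x y), x' + complex_of_real l * (y' - x')) \<in> side_pairs g x y x' y'"
proof (cases "dist x y = 0")
  case True
  with assms have "(g (l * dist x y), x' + complex_of_real l * (y' - x'))
                 = (g 0, x' + complex_of_real (0 / dist x y) * (y' - x'))"
    by simp
  then show ?thesis unfolding side_pairs_def by force
next
  case False
  with assms show ?thesis
    unfolding side_pairs_def by (auto intro!: exI[of _ "l * dist x y"] simp: mult_left_le_one_le)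
qed

lemma CAT0_comparison:
  fixes x y z :: "'a::metric_space"
  assumes "CAT0_space TYPE('a)"
    and "geodesic_seg g x y" "geodesic_seg h y z" "geodesic_seg k z x"
    and "dist x' y' = dist x y" "dist y' z' = dist y z" "dist z' x' = dist z x"
  defines "S \<equiv> side_pairs g x y x' y' \<union> side_pairs h y z y' z' \<union> side_pairs k z x z' x'"
  assumes "(p, p') \<in> S" "(r, r') \<in> S"
  shows "dist p r \<le> dist p' r'"
  using assms unfolding CAT0_space_def Let_def S_def by blast

lemma CAT0_CN_inequality:
  fixes p a b :: "'a::metric_space"
  assumes cat: "CAT0_space TYPE('a)" and g: "geodesic_seg g a b" and l: "0 \<le> l" "l \<le> 1"
  shows "(dist p (g (l * dist a b)))\<^sup>2
           \<le> (1 - l) * (dist p a)\<^sup>2 + l * (dist p b)\<^sup>2 - l * (1 - l) * (dist a b)\<^sup>2"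
proof -
  note geo = geodesic_seg_some_geodesic[OF CAT0_geodesic_space[OF cat]]
  obtain a' b' p' :: complex
    where c: "dist a' b' = dist a b" "dist b' p' = dist b p" "dist p' a' = dist p a"
    using comparison_triangle_of_points by blast
  let ?m' = "a' + complex_of_real l * (b' - a')"
  have "(p, p') \<in> side_pairs (some_geodesic b p) b p b' p'"
    using side_pairs_memI[OF geo c(2), of 1] by (simp add: geodesic_seg_end[OF geo])
  then have "dist p (g (l * dist a b)) \<le> dist p' ?m'"
    by (intro CAT0_comparison[OF cat g geo geo c]) (auto intro: side_pairs_memI[OF g c(1) l])
  then have "(dist p (g (l * dist a b)))\<^sup>2 \<le> (dist p' ?m')\<^sup>2"
    by (simp add: power_mono)
  also have "\<dots> = (1 - l) * (dist p' a')\<^sup>2 + l * (dist p' b')\<^sup>2 - l * (1 - l) * (dist a' b')\<^sup>2"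
    unfolding dist_norm cmod_power2 by (simp add: power2_eq_square algebra_simps)
  finally show ?thesis using c by (simp add: dist_commute)
qed

lemma CAT0_dist_geodesics_common_start:
  fixes v p w :: "'a::metric_space"
  assumes cat: "CAT0_space TYPE('a)"
    and g1: "geodesic_seg g1 v p" and g2: "geodesic_seg g2 v w" and l: "0 \<le> l" "l \<le> 1"
  shows "dist (g1 (l * dist v p)) (g2 (l * dist v w)) \<le> l * dist p w"
proof -
  note geo = geodesic_seg_some_geodesic[OF CAT0_geodesic_space[OF cat]]
  note g2' = geodesic_seg_reverse[OF g2]
  obtain v' p' w' :: complex
    where c: "dist v' p' = dist v p" "dist p' w' = dist p w" "dist w' v' = dist w v"
    using comparison_triangle_of_points by blast
  have "(g2 (dist v w - (1 - l) * dist w v), w' + complex_of_real (1 - l) * (v' - w'))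
          \<in> side_pairs (\<lambda>s. g2 (dist v w - s)) w v w' v'"
    using side_pairs_memI[OF g2' _, of w' v' "1 - l"] c l by (simp add: dist_commute)
  moreover have "dist v w - (1 - l) * dist w v = l * dist v w"
    "w' + complex_of_real (1 - l) * (v' - w') = v' + complex_of_real l * (w' - v')"
    by (simp_all add: dist_commute algebra_simps)
  ultimately have "dist (g1 (l * dist v p)) (g2 (l * dist v w))
      \<le> dist (v' + complex_of_real l * (p' - v')) (v' + complex_of_real l * (w' - v'))"
    by (intro CAT0_comparison[OF cat g1 geo g2' c]) (auto intro: side_pairs_memI[OF g1 c(1) l])
  also have "\<dots> = l * dist p' w'"
  proof -
    have "(v' + complex_of_real l * (p' - v')) - (v' + complex_of_real l * (w' - v'))
            = complex_of_real l * (p' - w')"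
      by (simp add: algebra_simps)
    then show ?thesis using l by (simp add: dist_norm norm_mult)
  qed
  finally show ?thesis using c by simp
qed

lemma CAT0_quadrilateral_inequality:
  fixes x y x' y' :: "'a::metric_space"
  assumes cat: "CAT0_space TYPE('a)"
  shows "(dist x y')\<^sup>2 + (dist y x')\<^sup>2
           \<le> (dist x x')\<^sup>2 + (dist y y')\<^sup>2 + (dist x y)\<^sup>2 + (dist x' y')\<^sup>2"
proof -
  note g = geodesic_seg_some_geodesic[OF CAT0_geodesic_space[OF cat], of x y']
  define m where "m = some_geodesic x y' ((1/2) * dist x y')"
  have "(dist x' m)\<^sup>2 \<le> (dist x x')\<^sup>2 / 2 + (dist x' y')\<^sup>2 / 2 - (dist x y')\<^sup>2 / 4"
       "(dist y m)\<^sup>2 \<le> (dist x y)\<^sup>2 / 2 + (dist y y')\<^sup>2 / 2 - (dist x y')\<^sup>2 / 4"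
    using CAT0_CN_inequality[OF cat g, of "1/2" x'] CAT0_CN_inequality[OF cat g, of "1/2" y]
    unfolding m_def by (simp_all add: dist_commute)
  moreover have "(dist y x')\<^sup>2 \<le> (dist x' m + dist y m)\<^sup>2"
    using dist_triangle3[of y x' m] by (intro power_mono) (simp_all add: dist_commute)
  moreover have "(dist x' m + dist y m)\<^sup>2 \<le> 2 * (dist x' m)\<^sup>2 + 2 * (dist y m)\<^sup>2"
    using sum_squares_bound[of "dist x' m" "dist y m"] by (simp add: power2_sum)
  ultimately show ?thesis by linarith
qed

section \<open>Projection onto a geodesic segment\<close>

lemma le_of_forall_le_minus_small_multiple:
  fixes x y w :: real
  assumes le: "\<And>e. 0 < e \<Longrightarrow> e \<le> 1 \<Longrightarrow> x - e * w \<le> y"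
  shows "x \<le> y"
proof (rule ccontr)
  assume "\<not> x \<le> y"
  with le[of 1] have c: "0 < x - y" "0 < w" by auto
  define e where "e = min 1 ((x - y) / (2 * w))"
  have "0 < e" "e \<le> 1"
    using c by (auto simp: e_def)
  then have "x - y \<le> e * w"
    using le by (simp add: algebra_simps)
  also have "\<dots> \<le> (x - y) / (2 * w) * w"
    using c by (intro mult_right_mono) (simp_all add: e_def)
  also have "\<dots> = (x - y) / 2"
    using c by simp
  finally show False using c by simp
qed

locale CAT0_segment =
  fixes \<sigma> :: "real \<Rightarrow> 'a::metric_space" and a b :: 'a
  assumes CAT0: "CAT0_space TYPE('a)" and geodesic: "geodesic_seg \<sigma> a b"
begin

abbreviation "len \<equiv> dist a b"

lemma dist_\<sigma>: "t \<in> {0..len} \<Longrightarrow> u \<in> {0..len} \<Longrightarrow> dist (\<sigma> t) (\<sigma> u) = \<bar>t - u\<bar>"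
  using geodesic_seg_dist[OF geodesic] .

lemma \<sigma>_start: "\<sigma> 0 = a" and \<sigma>_end: "\<sigma> len = b"
  using geodesic_seg_start[OF geodesic] geodesic_seg_end[OF geodesic] .

lemma geodesic_seg_some: "geodesic_seg (some_geodesic p p') p (p' :: 'a)"
  by (rule geodesic_seg_some_geodesic[OF CAT0_geodesic_space[OF CAT0]])

definition foot :: "'a \<Rightarrow> real" where
  "foot x = (SOME t. t \<in> {0..len} \<and> (\<forall>u\<in>{0..len}. dist x (\<sigma> t) \<le> dist x (\<sigma> u)))"

definition height :: "'a \<Rightarrow> real" where
  "height x = dist x (\<sigma> (foot x))"

lemma foot_in_segment: "foot x \<in> {0..len}"
  and dist_foot_le: "u \<in> {0..len} \<Longrightarrow> dist x (\<sigma> (foot x)) \<le> dist x (\<sigma> u)"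
proof -
  have "continuous_on {0..len} (\<lambda>t. dist x (\<sigma> t))"
    by (intro continuous_intros geodesic_seg_continuous[OF geodesic])
  from continuous_attains_inf[OF compact_Icc _ this]
  have "\<exists>t. t \<in> {0..len} \<and> (\<forall>u\<in>{0..len}. dist x (\<sigma> t) \<le> dist x (\<sigma> u))"
    by auto
  then have "foot x \<in> {0..len} \<and> (\<forall>u\<in>{0..len}. dist x (\<sigma> (foot x)) \<le> dist x (\<sigma> u))"
    unfolding foot_def by (rule someI_ex)
  then show "foot x \<in> {0..len}" "u \<in> {0..len} \<Longrightarrow> dist x (\<sigma> (foot x)) \<le> dist x (\<sigma> u)"
    by auto
qed

lemma height_le: "u \<in> {0..len} \<Longrightarrow> height x \<le> dist x (\<sigma> u)"
  unfolding height_def by (rule dist_foot_le)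

lemma height_nonneg: "0 \<le> height x"
  unfolding height_def by simp

text \<open>A nearest point sees the segment at a right angle: the CAT(0) inequality along
  the segment from \<open>\<sigma> t\<close> towards \<open>\<sigma> u\<close> bounds the squared distance by a quadratic
  polynomial whose derivative at the nearest point must be nonnegative.\<close>
lemma nearest_point_right_angle:
  assumes t: "t \<in> {0..len}" and nearest: "\<And>v. v \<in> {0..len} \<Longrightarrow> dist x (\<sigma> t) \<le> dist x (\<sigma> v)"
    and u: "u \<in> {0..len}"
  shows "(dist x (\<sigma> t))\<^sup>2 + (u - t)\<^sup>2 \<le> (dist x (\<sigma> u))\<^sup>2"
proof -
  define H where "H = dist x (\<sigma> t)"
  define E where "E = (dist x (\<sigma> u))\<^sup>2"
  define W where "W = (u - t)\<^sup>2"
  have W: "0 \<le> W" unfolding W_def by simp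
  note g = geodesic_seg_subsegment[OF geodesic t u]
  have step: "H\<^sup>2 + (1 - e) * W \<le> E" if e: "0 < e" "e \<le> 1" for e
  proof -
    let ?s = "t + e * (u - t)"
    have "(1 - e) * t + e * u \<in> {0..len}"
      using t u e convex_bound_le[of t len u "1 - e" e] by auto
    then have s: "?s \<in> {0..len}"
      by (simp add: algebra_simps)
    have "H\<^sup>2 \<le> (dist x (\<sigma> ?s))\<^sup>2"
      unfolding H_def using nearest[OF s] by (simp add: power_mono)
    also have "\<dots> \<le> (1 - e) * H\<^sup>2 + e * E - e * (1 - e) * W"
    proof -
      have "dist (\<sigma> t) (\<sigma> u) = \<bar>t - u\<bar>"
        by (rule dist_\<sigma>[OF t u])
      moreover have "\<bar>t - u\<bar>\<^sup>2 = W" "t + e * \<bar>t - u\<bar> * sgn (u - t) = ?s"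
        unfolding W_def by (simp_all add: power2_commute sgn_if)
      ultimately show ?thesis
        using CAT0_CN_inequality[OF CAT0 g, of e x] e unfolding H_def E_def by (simp add: mult.assoc)
    qed
    finally have "e * (H\<^sup>2 + (1 - e) * W) \<le> e * E"
      by (simp add: algebra_simps)
    with e show ?thesis by simp
  qed
  have "H\<^sup>2 + W \<le> E"
    by (rule le_of_forall_le_minus_small_multiple[where w = W])
      (use step in \<open>simp add: algebra_simps\<close>)
  then show ?thesis
    unfolding H_def E_def W_def .
qed

lemma height_right_angle: "u \<in> {0..len} \<Longrightarrow> (height x)\<^sup>2 + (u - foot x)\<^sup>2 \<le> (dist x (\<sigma> u))\<^sup>2"
  unfolding height_def by (rule nearest_point_right_angle[OF foot_in_segment dist_foot_le])

lemma foot_unique: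
  assumes t: "t \<in> {0..len}" and nearest: "\<And>v. v \<in> {0..len} \<Longrightarrow> dist x (\<sigma> t) \<le> dist x (\<sigma> v)"
  shows "foot x = t"
proof -
  have "(dist x (\<sigma> t))\<^sup>2 + (foot x - t)\<^sup>2 \<le> (dist x (\<sigma> (foot x)))\<^sup>2"
    by (rule nearest_point_right_angle[OF t nearest foot_in_segment])
  moreover have "dist x (\<sigma> (foot x)) = dist x (\<sigma> t)"
    using nearest[OF foot_in_segment[of x]] dist_foot_le[OF t, of x] by simp
  ultimately have "(foot x - t)\<^sup>2 \<le> 0"
    by simp
  then show ?thesis by simp
qed

lemma foot_\<sigma>: "u \<in> {0..len} \<Longrightarrow> foot (\<sigma> u) = u"
  by (rule foot_unique) auto

lemma height_\<sigma>: "u \<in> {0..len} \<Longrightarrow> height (\<sigma> u) = 0"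
  unfolding height_def by (simp add: foot_\<sigma>)

lemma foot_start: "foot a = 0" and foot_end: "foot b = len"
  using foot_\<sigma>[of 0] foot_\<sigma>[of len] by (simp_all add: \<sigma>_start \<sigma>_end)

lemma foot_lipschitz: "\<bar>foot x - foot y\<bar> \<le> dist x y"
proof -
  let ?x' = "\<sigma> (foot x)" and ?y' = "\<sigma> (foot y)"
  have "(dist x ?y')\<^sup>2 + (dist y ?x')\<^sup>2
          \<le> (dist x ?x')\<^sup>2 + (dist y ?y')\<^sup>2 + (dist x y)\<^sup>2 + (dist ?x' ?y')\<^sup>2"
    by (rule CAT0_quadrilateral_inequality[OF CAT0])
  moreover have "dist ?x' ?y' = \<bar>foot x - foot y\<bar>"
    by (rule dist_\<sigma>[OF foot_in_segment foot_in_segment])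
  moreover have "(height x)\<^sup>2 + (foot y - foot x)\<^sup>2 \<le> (dist x ?y')\<^sup>2"
    "(height y)\<^sup>2 + (foot x - foot y)\<^sup>2 \<le> (dist y ?x')\<^sup>2"
    by (rule height_right_angle[OF foot_in_segment])+
  ultimately have "(foot x - foot y)\<^sup>2 \<le> (dist x y)\<^sup>2"
    unfolding height_def by (simp add: power2_commute)
  then show ?thesis
    using abs_le_square_iff[of "foot x - foot y" "dist x y"] by simp
qed

lemma continuous_on_foot: "continuous_on S foot"
  by (rule lipschitz_on_continuous_on[of 1]) (simp add: lipschitz_on_def dist_real_def foot_lipschitz)

lemma height_le_dist_plus: "height x \<le> dist x y + height y"
  using height_le[OF foot_in_segment, of x y] dist_triangle[of x "\<sigma> (foot y)" y]
  unfolding height_def by linarith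

lemma height_lipschitz: "\<bar>height x - height y\<bar> \<le> dist x y"
  using height_le_dist_plus[of x y] height_le_dist_plus[of y x] by (simp add: dist_commute abs_le_iff)

lemma perpendicular_geodesic:
  assumes c: "geodesic_seg c (\<sigma> (foot x)) x" and s: "s \<in> {0..height x}"
  shows "foot (c s) = foot x" "height (c s) = s"
proof -
  have len_c: "dist (\<sigma> (foot x)) x = height x"
    unfolding height_def by (simp add: dist_commute)
  with s have cs: "dist (\<sigma> (foot x)) (c s) = s" and cx: "dist (c s) x = height x - s"
    using geodesic_seg_dist_start[OF c] geodesic_seg_dist_end[OF c] by simp_all
  have "dist (c s) (\<sigma> (foot x)) \<le> dist (c s) (\<sigma> v)" if "v \<in> {0..len}" for v
    using height_le[OF that, of x] dist_triangle[of x "\<sigma> v" "c s"] cs cx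
    by (simp add: dist_commute)
  then show "foot (c s) = foot x"
    by (intro foot_unique foot_in_segment)
  then show "height (c s) = s"
    unfolding height_def using cs by (simp add: dist_commute)
qed

end

section \<open>Chords of a Morse quasi-geodesic\<close>

definition morse_gauge :: "(real \<Rightarrow> 'a::metric_space) \<Rightarrow> real \<Rightarrow> real \<Rightarrow> real" where
  "morse_gauge q L C = (SOME M. \<forall>a b p. a \<le> b \<longrightarrow> quasi_geodesic L C {a..b} p \<longrightarrow>
        p a \<in> range q \<longrightarrow> p b \<in> range q \<longrightarrow> (\<forall>t\<in>{a..b}. \<exists>s. dist (p t) (q s) \<le> M))"

lemma morse_gauge:
  assumes "morse_quasi_geodesic q" "L \<ge> 1" "C \<ge> 0"
    and "quasi_geodesic L C {a..b} p" "a \<le> b" "p a \<in> range q" "p b \<in> range q" "t \<in> {a..b}"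
  shows "\<exists>s. dist (p t) (q s) \<le> morse_gauge q L C"
proof -
  have "\<exists>M. \<forall>a b p. a \<le> b \<longrightarrow> quasi_geodesic L C {a..b} p \<longrightarrow>
          p a \<in> range q \<longrightarrow> p b \<in> range q \<longrightarrow> (\<forall>t\<in>{a..b}. \<exists>s. dist (p t) (q s) \<le> M)"
    using assms(1-3) unfolding morse_quasi_geodesic_def by blast
  then have "\<forall>a b p. a \<le> b \<longrightarrow> quasi_geodesic L C {a..b} p \<longrightarrow> p a \<in> range q \<longrightarrow>
               p b \<in> range q \<longrightarrow> (\<forall>t\<in>{a..b}. \<exists>s. dist (p t) (q s) \<le> morse_gauge q L C)"
    unfolding morse_gauge_def by (rule someI_ex)
  with assms(4-8) show ?thesis by blast
qed

lemma quasi_geodesicD: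
  assumes "quasi_geodesic L C I p" "s \<in> I" "t \<in> I"
  shows "dist (p s) (p t) \<le> L * \<bar>s - t\<bar> + C" and "\<bar>s - t\<bar> \<le> L * (dist (p s) (p t) + C)"
proof -
  from assms have "L \<ge> 1" "\<bar>s - t\<bar> / L - C \<le> dist (p s) (p t)"
    unfolding quasi_geodesic_def by auto
  then show "\<bar>s - t\<bar> \<le> L * (dist (p s) (p t) + C)"
    by (simp add: divide_le_eq algebra_simps)
qed (use assms in \<open>auto simp: quasi_geodesic_def\<close>)

definition tracking_const :: "(real \<Rightarrow> 'a::metric_space) \<Rightarrow> real \<Rightarrow> real \<Rightarrow> real" where
  "tracking_const q L C = L * (L * (2 * morse_gauge q 1 0 + 1 + C)) + C + morse_gauge q 1 0"

locale Morse_chord = CAT0_segment \<sigma> "q r" "q (-r)"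
  for \<sigma> :: "real \<Rightarrow> 'a::metric_space" and q :: "real \<Rightarrow> 'a" and r :: real +
  fixes L C :: real
  assumes morse: "morse_quasi_geodesic q"
    and quasi_geodesic: "quasi_geodesic L C UNIV q"
    and r_nonneg: "0 \<le> r"
begin

lemma L_ge_1: "1 \<le> L"
  using quasi_geodesic unfolding quasi_geodesic_def by auto

lemma q_dist_le: "dist (q s) (q t) \<le> L * \<bar>s - t\<bar> + C"
  and q_param_le: "\<bar>s - t\<bar> \<le> L * (dist (q s) (q t) + C)"
  using quasi_geodesicD[OF quasi_geodesic] by auto

abbreviation "M\<^sub>\<sigma> \<equiv> morse_gauge q 1 0"

lemma \<sigma>_near_q: "t \<in> {0..len} \<Longrightarrow> \<exists>s. dist (\<sigma> t) (q s) \<le> M\<^sub>\<sigma>"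
  using geodesic_seg_quasi_geodesic[OF geodesic]
  by (rule morse_gauge[OF morse, rotated 2]) (auto simp: \<sigma>_start \<sigma>_end)

lemma morse_gauge_chord_nonneg: "0 \<le> M\<^sub>\<sigma>"
  using \<sigma>_near_q[of 0] by (auto intro: order_trans[OF zero_le_dist])

text \<open>Conversely \<open>q\<close> on \<open>[-r, r]\<close> stays near \<open>\<sigma>\<close>: walking along \<open>\<sigma>\<close>, the parameters of
  nearby points of \<open>q\<close> must pass from \<open>\<ge> s\<^sub>0\<close> to \<open>\<le> s\<^sub>0\<close>; at the crossing two such points
  are close, hence so are their parameters and \<open>s\<^sub>0\<close>.\<close>
lemma q_near_\<sigma>:
  assumes s0: "s0 \<in> {-r..r}"
  shows "\<exists>t\<in>{0..len}. dist (q s0) (\<sigma> t) \<le> tracking_const q L C"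
proof -
  define T where "T = {t\<in>{0..len}. \<exists>s\<le>s0. dist (\<sigma> t) (q s) \<le> M\<^sub>\<sigma>}"
  have "len \<in> T"
    unfolding T_def using s0 morse_gauge_chord_nonneg by (auto simp: \<sigma>_end intro!: exI[of _ "-r"])
  moreover have bdd: "bdd_below T"
    unfolding T_def by (rule bdd_belowI[of _ 0]) auto
  ultimately obtain t1 where t1: "t1 \<in> T" "t1 < Inf T + 1/2"
    using cInf_lessD[of T "Inf T + 1/2"] by force
  have Inf_T: "0 \<le> Inf T" "Inf T \<le> t1"
    using t1 bdd by (auto intro!: cInf_greatest cInf_lower simp: T_def)
  define t2 where "t2 = max 0 (Inf T - 1/4)"
  have t2: "t2 \<in> {0..len}" "\<bar>t1 - t2\<bar> \<le> 1"
    using t1 Inf_T unfolding t2_def T_def by auto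
  obtain s1 where s1: "s1 \<le> s0" "dist (\<sigma> t1) (q s1) \<le> M\<^sub>\<sigma>"
    using t1(1) unfolding T_def by auto
  obtain s2 where s2: "s0 \<le> s2" "dist (\<sigma> t2) (q s2) \<le> M\<^sub>\<sigma>"
  proof (cases "t2 = 0")
    case True
    then show ?thesis
      using that[of r] s0 morse_gauge_chord_nonneg by (simp add: \<sigma>_start)
  next
    case False
    then have "t2 \<notin> T"
      using cInf_lower[OF _ bdd] unfolding t2_def by force
    moreover obtain s where s: "dist (\<sigma> t2) (q s) \<le> M\<^sub>\<sigma>"
      using \<sigma>_near_q[OF t2(1)] by blast
    ultimately have "\<not> s \<le> s0"
      using t2(1) unfolding T_def by blast
    with s show ?thesis
      by (intro that[of s]) auto
  qed
  have "dist (q s1) (q s2) \<le> dist (q s1) (\<sigma> t1) + dist (\<sigma> t1) (\<sigma> t2) + dist (\<sigma> t2) (q s2)"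
    using dist_triangle[of "q s1" "q s2" "\<sigma> t1"] dist_triangle[of "\<sigma> t1" "q s2" "\<sigma> t2"] by linarith
  also have "\<dots> \<le> 2 * M\<^sub>\<sigma> + 1"
    using s1 s2 t2 dist_\<sigma>[OF _ t2(1), of t1] t1(1) unfolding T_def by (auto simp: dist_commute)
  finally have "L * (dist (q s1) (q s2) + C) \<le> L * (2 * M\<^sub>\<sigma> + 1 + C)"
    using L_ge_1 by (intro mult_left_mono) auto
  then have "\<bar>s1 - s2\<bar> \<le> L * (2 * M\<^sub>\<sigma> + 1 + C)"
    using q_param_le[of s1 s2] by linarith
  then have "L * \<bar>s0 - s2\<bar> \<le> L * (L * (2 * M\<^sub>\<sigma> + 1 + C))"
    using s1 s2 L_ge_1 by (intro mult_left_mono) auto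
  then have "dist (q s0) (q s2) \<le> L * (L * (2 * M\<^sub>\<sigma> + 1 + C)) + C"
    using q_dist_le[of s0 s2] by linarith
  then have "dist (q s0) (\<sigma> t2) \<le> tracking_const q L C"
    unfolding tracking_const_def using s2 dist_triangle[of "q s0" "\<sigma> t2" "q s2"]
    by (simp add: dist_commute)
  with t2 show ?thesis by blast
qed

end

section \<open>Detours\<close>

text \<open>The point \<open>y'\<close> lies at the same relative height \<open>\<mu>\<close> above the foot of \<open>y\<close> as \<open>x'\<close>
  above the foot of \<open>x\<close>. Because \<open>y\<close> is much closer to \<open>x\<close> than \<open>x\<close> is to \<open>\<sigma>\<close>, convexity
  makes the crossing from \<open>x'\<close> to \<open>y'\<close> not much longer than \<open>gap\<close>, which turns the detour
  into a (4, 1)-quasi-geodesic between the endpoints of \<open>\<sigma>\<close>.\<close>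
locale detour = Morse_chord +
  fixes x y :: 'a and gap \<epsilon> :: real
  assumes gap: "1 \<le> gap"
    and \<epsilon>: "0 < \<epsilon>" "\<epsilon> \<le> 1/2" "\<epsilon> * gap \<le> 2"
    and close: "dist x y \<le> \<epsilon> * height x"
    and feet: "foot y = foot x + gap"
begin

definition "h = gap / 4"
definition "\<mu> = h / height x"
definition "x' = some_geodesic (\<sigma> (foot x)) x h"
definition "y' = some_geodesic (\<sigma> (foot y)) y (\<mu> * height y)"
definition "s\<^sub>1 = foot x"
definition "s\<^sub>2 = s\<^sub>1 + h"
definition "s\<^sub>3 = s\<^sub>2 + dist x' y'"
definition "s\<^sub>4 = s\<^sub>3 + \<mu> * height y"
definition "s\<^sub>5 = s\<^sub>4 + (len - foot y)"
definition "slack = dist x' y' - gap"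

definition detour_path :: "real \<Rightarrow> 'a" where
  "detour_path s =
    (if s \<le> s\<^sub>1 then \<sigma> s
     else if s \<le> s\<^sub>2 then some_geodesic (\<sigma> (foot x)) x (s - s\<^sub>1)
     else if s \<le> s\<^sub>3 then some_geodesic x' y' (s - s\<^sub>2)
     else if s \<le> s\<^sub>4 then some_geodesic (\<sigma> (foot y)) y (s\<^sub>4 - s)
     else \<sigma> (foot y + (s - s\<^sub>4)))"

lemma gap_le_height: "gap \<le> \<epsilon> * height x"
  using foot_lipschitz[of x y] feet close by simp

lemma height_x: "2 * gap \<le> height x"
  using gap_le_height \<epsilon> gap mult_right_mono[OF \<epsilon>(2) height_nonneg[of x]] by linarith

lemma h_pos: "0 < h"
  unfolding h_def using gap by simp

lemma ratio: "0 < \<mu>" "\<mu> \<le> 1/8" "\<mu> * height x = h"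
  using height_x gap h_pos unfolding \<mu>_def h_def by (auto simp: field_simps)

lemma ratio_height_y: "\<mu> * height y \<le> height y"
  using ratio height_nonneg[of y] by (simp add: mult_left_le_one_le)

lemma height_y: "(1 - \<epsilon>) * height x \<le> height y" "height y \<le> (1 + \<epsilon>) * height x"
  using height_lipschitz[of x y] close by (auto simp: algebra_simps abs_le_iff)

lemma foot_x': "foot x' = foot x" and height_x': "height x' = h"
proof -
  have "h \<in> {0..height x}"
    using height_x h_pos by (simp add: h_def)
  from perpendicular_geodesic[OF geodesic_seg_some this]
  show "foot x' = foot x" "height x' = h"
    by (simp_all add: x'_def)
qed

lemma foot_y': "foot y' = foot y" and height_y': "height y' = \<mu> * height y"
  unfolding y'_def
  using perpendicular_geodesic[OF geodesic_seg_some, of "\<mu> * height y" y] ratio ratio_height_y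
    height_nonneg[of y]
  by auto

lemma height_y'_bounds: "0 < height y'" "height y' \<le> 3/2 * h"
proof -
  have "0 < (1 - \<epsilon>) * height x"
    using \<epsilon> height_x gap by (intro mult_pos_pos) auto
  then have "0 < height y"
    using height_y(1) by linarith
  then show "0 < height y'"
    using ratio by (simp add: height_y')
  have "\<mu> * height y \<le> \<mu> * ((1 + \<epsilon>) * height x)"
    using height_y(2) ratio by (intro mult_left_mono) auto
  also have "\<dots> = (1 + \<epsilon>) * h"
    using ratio(3) by (simp add: algebra_simps)
  also have "\<dots> \<le> 3/2 * h"
    using \<epsilon> h_pos by (intro mult_right_mono) auto
  finally show "height y' \<le> 3/2 * h"
    by (simp add: height_y')
qed

lemma gap_le_crossing: "gap \<le> dist x' y'"
  using foot_lipschitz[of x' y'] foot_x' foot_y' feet gap by simp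

text \<open>Both \<open>x'\<close> and \<open>y'\<close> are close to the point \<open>m\<close> at ratio \<open>\<mu>\<close> on the geodesic from the foot of
  \<open>x\<close> to \<open>y\<close>, by convexity of the metric seen from the foot of \<open>x\<close> and from \<open>y\<close>.\<close>
lemma crossing_le: "dist x' y' \<le> gap + \<epsilon> * h"
proof -
  let ?g = "some_geodesic (\<sigma> (foot x)) y"
  let ?m = "?g (\<mu> * dist (\<sigma> (foot x)) y)"
  have dist_foot_x: "dist (\<sigma> (foot x)) x = height x"
    unfolding height_def by (simp add: dist_commute)
  have dist_foot_y: "dist (\<sigma> (foot y)) y = height y"
    unfolding height_def by (simp add: dist_commute)
  have "dist x' ?m \<le> \<mu> * dist x y"
    using CAT0_dist_geodesics_common_start[OF CAT0 geodesic_seg_some[of "\<sigma> (foot x)" x]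
          geodesic_seg_some[of "\<sigma> (foot x)" y], of \<mu>] ratio
    by (simp add: x'_def dist_foot_x)
  also have "\<dots> \<le> \<epsilon> * h"
    using mult_left_mono[OF close, of \<mu>] ratio by (simp add: mult.left_commute)
  finally have 1: "dist x' ?m \<le> \<epsilon> * h" .
  have "dist (\<sigma> (foot x)) y - (1 - \<mu>) * dist y (\<sigma> (foot x)) = \<mu> * dist (\<sigma> (foot x)) y"
       "dist (\<sigma> (foot y)) y - (1 - \<mu>) * dist y (\<sigma> (foot y)) = \<mu> * height y"
    using dist_foot_y by (simp_all add: dist_commute algebra_simps)
  then have "dist ?m y' \<le> (1 - \<mu>) * dist (\<sigma> (foot x)) (\<sigma> (foot y))"
    using CAT0_dist_geodesics_common_start[OF CAT0
        geodesic_seg_reverse[OF geodesic_seg_some[of "\<sigma> (foot x)" y]]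
        geodesic_seg_reverse[OF geodesic_seg_some[of "\<sigma> (foot y)" y]], of "1 - \<mu>"] ratio
    by (simp add: y'_def)
  moreover have "dist (\<sigma> (foot x)) (\<sigma> (foot y)) = gap"
    using dist_\<sigma>[OF foot_in_segment[of x] foot_in_segment[of y]] feet gap by simp
  ultimately have 2: "dist ?m y' \<le> (1 - \<mu>) * gap"
    by simp
  have "dist x' y' \<le> dist x' ?m + dist ?m y'"
    by (rule dist_triangle)
  also have "\<dots> \<le> gap + \<epsilon> * h"
  proof -
    have "(1 - \<mu>) * gap \<le> gap"
      using ratio gap by (simp add: algebra_simps)
    with 1 2 show ?thesis by linarith
  qed
  finally show ?thesis .
qed

lemma slack: "0 \<le> slack" "slack \<le> 1/2"
  using gap_le_crossing crossing_le \<epsilon>(3) unfolding slack_def h_def by auto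

lemma breakpoints:
  "s\<^sub>1 = foot x" "s\<^sub>2 = s\<^sub>1 + h" "s\<^sub>3 = s\<^sub>2 + gap + slack" "s\<^sub>4 = s\<^sub>3 + height y'"
  "s\<^sub>5 = s\<^sub>4 + (len - foot y)" "foot y = foot x + gap" "gap = 4 * h"
  unfolding s\<^sub>1_def s\<^sub>2_def s\<^sub>3_def s\<^sub>4_def s\<^sub>5_def slack_def h_def height_y'
  by (simp_all add: feet)

lemma breakpoints_mono: "0 \<le> s\<^sub>1" "s\<^sub>1 < s\<^sub>2" "s\<^sub>2 < s\<^sub>3" "s\<^sub>3 < s\<^sub>4" "s\<^sub>4 \<le> s\<^sub>5" "foot y \<le> len"
proof -
  have "0 \<le> foot x" "foot y \<le> len"
    using foot_in_segment[of x] foot_in_segment[of y] by simp_all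
  with h_pos slack height_y'_bounds breakpoints
  show "0 \<le> s\<^sub>1" "s\<^sub>1 < s\<^sub>2" "s\<^sub>2 < s\<^sub>3" "s\<^sub>3 < s\<^sub>4" "s\<^sub>4 \<le> s\<^sub>5" "foot y \<le> len"
    by linarith+
qed

lemma geodesic_up: "geodesic_seg (some_geodesic (\<sigma> (foot x)) x) (\<sigma> (foot x)) x"
  and geodesic_across: "geodesic_seg (some_geodesic x' y') x' y'"
  and geodesic_down: "geodesic_seg (some_geodesic (\<sigma> (foot y)) y) (\<sigma> (foot y)) y"
  by (rule geodesic_seg_some)+

lemma detour_path_start: "s \<le> s\<^sub>1 \<Longrightarrow> detour_path s = \<sigma> s"
  by (simp add: detour_path_def)

lemma detour_path_up:
  assumes "s\<^sub>1 \<le> s" "s \<le> s\<^sub>2"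
  shows "detour_path s = some_geodesic (\<sigma> (foot x)) x (s - s\<^sub>1)"
proof (cases "s = s\<^sub>1")
  case True
  then show ?thesis
    using geodesic_seg_start[OF geodesic_up] by (simp add: detour_path_def s\<^sub>1_def)
next
  case False
  with assms show ?thesis
    by (simp add: detour_path_def)
qed

lemma detour_path_across:
  assumes "s\<^sub>2 \<le> s" "s \<le> s\<^sub>3"
  shows "detour_path s = some_geodesic x' y' (s - s\<^sub>2)"
proof (cases "s = s\<^sub>2")
  case True
  then show ?thesis
    using geodesic_seg_start[OF geodesic_across] breakpoints_mono(2)
    by (simp add: detour_path_def s\<^sub>2_def x'_def)
next
  case False
  with assms breakpoints_mono(2) show ?thesis
    by (simp add: detour_path_def)
qed

lemma detour_path_down:
  assumes "s\<^sub>3 \<le> s" "s \<le> s\<^sub>4"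
  shows "detour_path s = some_geodesic (\<sigma> (foot y)) y (s\<^sub>4 - s)"
proof (cases "s = s\<^sub>3")
  case True
  have "some_geodesic x' y' (s\<^sub>3 - s\<^sub>2) = some_geodesic (\<sigma> (foot y)) y (s\<^sub>4 - s\<^sub>3)"
    using geodesic_seg_end[OF geodesic_across] by (simp add: s\<^sub>3_def s\<^sub>4_def y'_def)
  with True breakpoints_mono(2,3) show ?thesis
    by (simp add: detour_path_def)
next
  case False
  with assms breakpoints_mono(2,3) show ?thesis
    by (simp add: detour_path_def)
qed

lemma detour_path_end:
  assumes "s\<^sub>4 \<le> s"
  shows "detour_path s = \<sigma> (foot y + (s - s\<^sub>4))"
proof (cases "s = s\<^sub>4")
  case True
  with breakpoints_mono(2-4) show ?thesis
    using geodesic_seg_start[OF geodesic_down] by (simp add: detour_path_def)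
next
  case False
  with assms breakpoints_mono(2-4) show ?thesis
    by (simp add: detour_path_def)
qed

lemma detour_path_endpoints: "detour_path 0 = q r" "detour_path s\<^sub>5 = q (-r)"
proof -
  show "detour_path 0 = q r"
    using detour_path_start[of 0] breakpoints_mono(1) by (simp add: \<sigma>_start)
  have "foot y + (s\<^sub>5 - s\<^sub>4) = len"
    by (simp add: s\<^sub>5_def)
  then show "detour_path s\<^sub>5 = q (-r)"
    using detour_path_end[of s\<^sub>5] breakpoints_mono(5) by (simp add: \<sigma>_end)
qed

lemma detour_path_x': "detour_path s\<^sub>2 = x'"
proof -
  have "s\<^sub>2 - s\<^sub>1 = h"
    by (simp add: s\<^sub>2_def)
  then show ?thesis
    using detour_path_up[of s\<^sub>2] breakpoints_mono(2) by (simp add: x'_def)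
qed

lemma detour_path_lipschitz: "1-lipschitz_on {0..s\<^sub>5} detour_path"
proof -
  note mono = breakpoints_mono
  have height_x_pos: "h \<le> height x"
    using height_x h_pos by (simp add: h_def)
  have "1-lipschitz_on {0..s\<^sub>1} (\<lambda>s. \<sigma> (0 + 1 * s))"
    by (rule geodesic_seg_lipschitz_on_affine[OF geodesic])
      (use mono foot_in_segment[of x] in \<open>auto simp: s\<^sub>1_def\<close>)
  moreover have "1-lipschitz_on {s\<^sub>1..s\<^sub>2} (\<lambda>s. some_geodesic (\<sigma> (foot x)) x (- s\<^sub>1 + 1 * s))"
    by (rule geodesic_seg_lipschitz_on_affine[OF geodesic_up])
      (use height_x_pos in \<open>auto simp: s\<^sub>2_def height_def dist_commute\<close>)
  moreover have "1-lipschitz_on {s\<^sub>2..s\<^sub>3} (\<lambda>s. some_geodesic x' y' (- s\<^sub>2 + 1 * s))"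
    by (rule geodesic_seg_lipschitz_on_affine[OF geodesic_across]) (auto simp: s\<^sub>3_def)
  moreover have "1-lipschitz_on {s\<^sub>3..s\<^sub>4} (\<lambda>s. some_geodesic (\<sigma> (foot y)) y (s\<^sub>4 + (-1) * s))"
    by (rule geodesic_seg_lipschitz_on_affine[OF geodesic_down])
      (use ratio_height_y in \<open>auto simp: s\<^sub>4_def height_def dist_commute\<close>)
  moreover have "1-lipschitz_on {s\<^sub>4..s\<^sub>5} (\<lambda>s. \<sigma> (foot y - s\<^sub>4 + 1 * s))"
    by (rule geodesic_seg_lipschitz_on_affine[OF geodesic])
      (use foot_in_segment[of y] in \<open>auto simp: s\<^sub>5_def\<close>)
  ultimately have "1-lipschitz_on {0..s\<^sub>5} (\<lambda>s. if s \<le> s\<^sub>1 then \<sigma> s else if s \<le> s\<^sub>2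
      then some_geodesic (\<sigma> (foot x)) x (s - s\<^sub>1) else if s \<le> s\<^sub>3 then some_geodesic x' y' (s - s\<^sub>2)
      else if s \<le> s\<^sub>4 then some_geodesic (\<sigma> (foot y)) y (s\<^sub>4 - s) else \<sigma> (foot y + (s - s\<^sub>4)))"
    using detour_path_up[of s\<^sub>1] detour_path_across[of s\<^sub>2] detour_path_down[of s\<^sub>3] detour_path_end[of s\<^sub>4]
      mono
    by (intro lipschitz_on_concat) (simp_all add: detour_path_def algebra_simps)
  then show ?thesis
    unfolding detour_path_def .
qed

text \<open>Since foot and height are 1-Lipschitz, these bounds alone yield the lower
  quasi-geodesic bound.\<close>
lemma detour_path_coordinates:
  assumes "s \<in> {0..s\<^sub>5}"
  defines "p \<equiv> detour_path s"
  shows "(s \<le> s\<^sub>1 \<and> foot p = s \<and> height p = 0)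
       \<or> (s\<^sub>1 \<le> s \<and> s \<le> s\<^sub>2 \<and> foot p = foot x \<and> height p = s - s\<^sub>1)
       \<or> (s\<^sub>2 \<le> s \<and> s \<le> s\<^sub>3 \<and> foot x + (s - s\<^sub>2) - slack \<le> foot p \<and> foot p \<le> foot x + (s - s\<^sub>2)
            \<and> h - (s - s\<^sub>2) \<le> height p \<and> height y' - (s\<^sub>3 - s) \<le> height p)
       \<or> (s\<^sub>3 \<le> s \<and> s \<le> s\<^sub>4 \<and> foot p = foot y \<and> height p = s\<^sub>4 - s)
       \<or> (s\<^sub>4 \<le> s \<and> foot p = foot y + (s - s\<^sub>4) \<and> height p = 0)"
proof -
  note mono = breakpoints_mono
  consider "s \<le> s\<^sub>1" | "s\<^sub>1 \<le> s" "s \<le> s\<^sub>2" | "s\<^sub>2 \<le> s" "s \<le> s\<^sub>3" | "s\<^sub>3 \<le> s" "s \<le> s\<^sub>4" | "s\<^sub>4 \<le> s"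
    by linarith
  then show ?thesis
  proof cases
    case 1
    then have "s \<in> {0..len}"
      using assms(1) mono foot_in_segment[of x] by (auto simp: s\<^sub>1_def)
    with 1 show ?thesis
      by (simp add: p_def detour_path_start foot_\<sigma> height_\<sigma>)
  next
    case 2
    then have "s - s\<^sub>1 \<in> {0..height x}"
      using height_x h_pos by (auto simp: s\<^sub>2_def h_def)
    with 2 show ?thesis
      using perpendicular_geodesic[OF geodesic_up] by (simp add: p_def detour_path_up)
  next
    case 3
    then have "s - s\<^sub>2 \<in> {0..dist x' y'}"
      by (simp add: s\<^sub>3_def)
    then have "dist x' p = s - s\<^sub>2" "dist p y' = s\<^sub>3 - s"
      using geodesic_seg_dist_start[OF geodesic_across] geodesic_seg_dist_end[OF geodesic_across] 3
      by (simp_all add: p_def detour_path_across s\<^sub>3_def)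
    with 3 show ?thesis
      using foot_lipschitz[of x' p] foot_lipschitz[of p y'] height_lipschitz[of x' p]
        height_lipschitz[of p y'] foot_x' height_x' foot_y' breakpoints
      by (simp add: abs_le_iff)
  next
    case 4
    then have "s\<^sub>4 - s \<in> {0..height y}"
      using ratio_height_y by (simp add: s\<^sub>4_def)
    with 4 show ?thesis
      using perpendicular_geodesic[OF geodesic_down] by (simp add: p_def detour_path_down)
  next
    case 5
    then have "foot y + (s - s\<^sub>4) \<in> {0..len}"
      using assms(1) mono foot_in_segment[of y] by (auto simp: s\<^sub>5_def)
    with 5 show ?thesis
      by (simp add: p_def detour_path_end foot_\<sigma> height_\<sigma>)
  qed
qed

lemma detour_path_lower_bound:
  assumes s: "s \<in> {0..s\<^sub>5}" and t: "t \<in> {0..s\<^sub>5}" and "s \<le> t"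
  shows "t - s \<le> 4 * dist (detour_path s) (detour_path t) + 4"
proof -
  let ?d = "dist (detour_path s) (detour_path t)"
  have "foot (detour_path s) - foot (detour_path t) \<le> ?d" "foot (detour_path t) - foot (detour_path s) \<le> ?d"
    "height (detour_path s) - height (detour_path t) \<le> ?d" "height (detour_path t) - height (detour_path s) \<le> ?d"
    using foot_lipschitz height_lipschitz by (simp_all add: abs_le_iff)
  with detour_path_coordinates[OF s] detour_path_coordinates[OF t] \<open>s \<le> t\<close>
    breakpoints slack h_pos height_y'_bounds
  show ?thesis
    by (elim disjE) linarith+
qed

lemma detour_path_quasi_geodesic: "quasi_geodesic 4 1 {0..s\<^sub>5} detour_path"
  unfolding quasi_geodesic_def
proof (intro conjI ballI)
  fix s t assume st: "s \<in> {0..s\<^sub>5}" "t \<in> {0..s\<^sub>5}"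
  have "dist (detour_path s) (detour_path t) \<le> \<bar>s - t\<bar>"
    using lipschitz_onD[OF detour_path_lipschitz st] by (simp add: dist_real_def)
  also have "\<dots> \<le> 4 * \<bar>s - t\<bar> + 1"
    by simp
  finally show "dist (detour_path s) (detour_path t) \<le> 4 * \<bar>s - t\<bar> + 1" .
  show "\<bar>s - t\<bar> / 4 - 1 \<le> dist (detour_path s) (detour_path t)"
    using detour_path_lower_bound[OF st] detour_path_lower_bound[OF st(2,1)]
    by (cases "s \<le> t") (auto simp: dist_commute field_simps)
qed simp_all

lemma x'_near_q: "\<exists>s. dist x' (q s) \<le> morse_gauge q 4 1"
  using morse_gauge[OF morse _ _ detour_path_quasi_geodesic, of s\<^sub>2] detour_path_endpoints
    detour_path_x' breakpoints_mono
  by auto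

end

context Morse_chord
begin

lemma detour_point_near_q:
  assumes gap: "1 \<le> gap" and \<epsilon>: "0 < \<epsilon>" "\<epsilon> \<le> 1/2" "\<epsilon> * gap \<le> 2"
    and close: "dist x y \<le> \<epsilon> * height x" and feet: "foot x + gap \<le> foot y"
  shows "\<exists>z s. foot z = foot x \<and> height z = gap / 4 \<and> dist z (q s) \<le> morse_gauge q 4 1"
proof -
  let ?g = "some_geodesic x y"
  have g: "geodesic_seg ?g x y"
    by (rule geodesic_seg_some)
  have "continuous_on {0..dist x y} (\<lambda>s. foot (?g s))"
    by (rule continuous_on_compose2[OF continuous_on_foot geodesic_seg_continuous[OF g]]) auto
  moreover have "foot (?g 0) \<le> foot x + gap" "foot x + gap \<le> foot (?g (dist x y))"
    using gap feet by (simp_all add: geodesic_seg_start[OF g] geodesic_seg_end[OF g])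
  ultimately obtain s where s: "s \<in> {0..dist x y}" "foot (?g s) = foot x + gap"
    using IVT'[of "\<lambda>s. foot (?g s)" 0 "foot x + gap" "dist x y"] by auto
  then have "dist x (?g s) \<le> \<epsilon> * height x"
    using geodesic_seg_dist_start[OF g s(1)] close by simp
  then interpret detour \<sigma> q r L C x "?g s" gap \<epsilon>
    by unfold_locales (use gap \<epsilon> s in auto)
  show ?thesis
    using x'_near_q foot_x' height_x' by (auto simp: h_def)
qed

lemma step_far_from_segment_is_long:
  assumes gap: "1 \<le> gap" and \<epsilon>: "0 < \<epsilon>" "\<epsilon> \<le> 1/2" "\<epsilon> * gap \<le> 2"
    and gap_large: "morse_gauge q 4 1 + tracking_const q L C < gap / 4"
    and r_large: "morse_gauge q 4 1 + gap / 4 + w + tracking_const q L C < r / L - C"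
    and m: "m \<in> {0..len}" "dist (q 0) (\<sigma> m) \<le> tracking_const q L C"
    and x: "\<bar>foot x - m\<bar> \<le> w" and feet: "foot x + gap \<le> foot y"
  shows "\<epsilon> * height x < dist x y"
proof (rule ccontr)
  assume "\<not> ?thesis"
  then obtain z s where z: "foot z = foot x" "height z = gap / 4" "dist z (q s) \<le> morse_gauge q 4 1"
    using detour_point_near_q[OF gap \<epsilon>, of x y] feet by auto
  show False
  proof (cases "s \<in> {-r..r}")
    case True
    then obtain t where "t \<in> {0..len}" "dist (q s) (\<sigma> t) \<le> tracking_const q L C"
      using q_near_\<sigma> by blast
    then show False
      using height_le[of t z] dist_triangle[of z "\<sigma> t" "q s"] z gap_large by linarith
  next
    case False
    \<comment> \<open>then \<open>q s\<close> is far from \<open>q 0\<close>, although \<open>z\<close> lies just above \<open>\<sigma> m\<close>, which is near \<open>q 0\<close>\<close>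
    then have "r \<le> L * (dist (q s) (q 0) + C)"
      using q_param_le[of s 0] by auto
    then have "r / L - C \<le> dist (q s) (q 0)"
      using L_ge_1 by (simp add: divide_le_eq algebra_simps)
    also have "\<dots> \<le> dist (q s) z + dist z (\<sigma> (foot z)) + dist (\<sigma> (foot z)) (\<sigma> m) + dist (\<sigma> m) (q 0)"
      using dist_triangle[of "q s" "q 0" z] dist_triangle[of z "q 0" "\<sigma> (foot z)"]
        dist_triangle[of "\<sigma> (foot z)" "q 0" "\<sigma> m"] by linarith
    also have "\<dots> \<le> morse_gauge q 4 1 + gap / 4 + w + tracking_const q L C"
      using z m x dist_\<sigma>[OF foot_in_segment m(1), of z] by (simp add: height_def dist_commute)
    finally show False
      using r_large by linarith
  qed
qed

end

section \<open>Length of paths avoiding a ball\<close>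

lemma path_length_ge_sum:
  fixes p :: "real \<Rightarrow> 'a::metric_space" and u :: "nat \<Rightarrow> real"
  assumes "0 \<le> u 0" "u N \<le> 1" "\<And>k. k < N \<Longrightarrow> u k \<le> u (Suc k)"
  shows "ereal (\<Sum>k<N. dist (p (u k)) (p (u (Suc k)))) \<le> path_length p"
proof -
  define t where "t i = (if i = 0 then 0 else if i \<le> Suc N then u (i - 1) else 1)" for i
  have "t 0 = 0" "t (Suc (Suc N)) = 1"
    unfolding t_def by auto
  moreover have "t i \<le> t (Suc i)" if "i < Suc (Suc N)" for i
    using that assms by (cases i) (auto simp: t_def less_Suc_eq)
  ultimately have length: "ereal (\<Sum>i<Suc (Suc N). dist (p (t i)) (p (t (Suc i)))) \<le> path_length p"
    unfolding path_length_def by (intro SUP_upper2[of "(Suc (Suc N), t)"]) auto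
  let ?d = "\<lambda>i. dist (p (t i)) (p (t (Suc i)))"
  have "(\<Sum>i<Suc (Suc N). ?d i) = ?d 0 + (\<Sum>i<N. ?d (Suc i)) + ?d (Suc N)"
    by (subst sum.lessThan_Suc_shift) simp
  moreover have "(\<Sum>i<N. ?d (Suc i)) = (\<Sum>k<N. dist (p (u k)) (p (u (Suc k))))"
    by (rule sum.cong) (auto simp: t_def)
  ultimately have "(\<Sum>k<N. dist (p (u k)) (p (u (Suc k)))) \<le> (\<Sum>i<Suc (Suc N). ?d i)"
    by simp
  with length show ?thesis
    by (meson ereal_less_eq(3) order_trans)
qed

lemma continuous_on_increasing_level_times:
  fixes f :: "real \<Rightarrow> real" and v :: "nat \<Rightarrow> real"
  assumes ab: "a \<le> b" and f: "continuous_on {a..b} f"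
    and levels: "\<And>k. k \<le> N \<Longrightarrow> v k \<in> {f a..f b}" and mono: "\<And>k. k < N \<Longrightarrow> v k \<le> v (Suc k)"
  shows "\<exists>t. (\<forall>k\<le>N. t k \<in> {a..b} \<and> f (t k) = v k) \<and> (\<forall>k<N. t k \<le> t (Suc k))"
proof -
  define S where "S k = {t \<in> {a..b}. v k \<le> f t}" for k
  have S: "b \<in> S k" "bdd_below (S k)" "closed (S k)" if "k \<le> N" for k
  proof -
    show "b \<in> S k"
      using levels[OF that] ab unfolding S_def by auto
    then show "bdd_below (S k)"
      unfolding S_def by (auto intro: bdd_belowI[of _ a])
    have "S k = {a..b} \<inter> f -` {v k..}"
      unfolding S_def by auto
    then show "closed (S k)"
      using continuous_closed_preimage[OF f] by simp
  qed
  have "Inf (S k) \<in> {a..b} \<and> f (Inf (S k)) = v k" if k: "k \<le> N" for k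
  proof -
    have "Inf (S k) \<in> S k"
      using closed_contains_Inf S[OF k] by blast
    then have t: "Inf (S k) \<in> {a..b}" "v k \<le> f (Inf (S k))"
      unfolding S_def by auto
    moreover obtain t' where t': "a \<le> t'" "t' \<le> Inf (S k)" "f t' = v k"
      using IVT'[of f a "v k" "Inf (S k)"] t levels[OF k] continuous_on_subset[OF f, of "{a..Inf (S k)}"]
      by auto
    moreover have "Inf (S k) \<le> t'"
      using t t' by (intro cInf_lower S) (auto simp: S_def k)
    ultimately show ?thesis by simp
  qed
  moreover have "Inf (S k) \<le> Inf (S (Suc k))" if "k < N" for k
    using S[of k] S[of "Suc k"] mono[OF that] that
    by (intro cInf_superset_mono) (auto simp: S_def)
  ultimately show ?thesis
    by (intro exI[of _ "\<lambda>k. Inf (S k)"] conjI allI impI) simp_all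
qed

context Morse_chord
begin

text \<open>A path avoiding the ball of radius \<open>\<rho>\<close> about \<open>q 0\<close> must pass, above the segment of
  length \<open>2 w\<close> of \<open>\<sigma>\<close> near \<open>q 0\<close>, over \<open>N\<close> consecutive feet spaced \<open>gap\<close> apart; each of
  these steps is long because the path stays at height \<open>\<ge> \<rho> - tracking_const q L C - w\<close>.\<close>
lemma avoiding_path_length:
  fixes p :: "real \<Rightarrow> 'a"
  assumes p: "continuous_on {0..1} p" "p 0 = q r" "p 1 = q (-r)"
    and avoid: "p ` {0..1} \<inter> ball (q 0) \<rho> = {}"
    and gap: "1 \<le> gap" and \<epsilon>: "0 < \<epsilon>" "\<epsilon> \<le> 1/2" "\<epsilon> * gap \<le> 2"
    and gap_large: "morse_gauge q 4 1 + tracking_const q L C < gap / 4"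
    and r_large: "morse_gauge q 4 1 + gap / 4 + w + tracking_const q L C < r / L - C"
    and w: "0 \<le> w" "w \<le> \<rho> - tracking_const q L C" and N: "real N * gap \<le> 2 * w"
  shows "ereal (real N * (\<epsilon> * (\<rho> - tracking_const q L C - w))) \<le> path_length p"
proof -
  let ?H = "tracking_const q L C"
  have far: "\<rho> \<le> dist (q 0) (p t)" if "t \<in> {0..1}" for t
  proof -
    have "p t \<notin> ball (q 0) \<rho>"
      using avoid that by blast
    then show ?thesis by (simp add: not_less)
  qed
  obtain m where m: "m \<in> {0..len}" "dist (q 0) (\<sigma> m) \<le> ?H"
    using q_near_\<sigma>[of 0] r_nonneg by auto
  have "\<rho> \<le> ?H + m" "\<rho> \<le> ?H + (len - m)"
    using far[of 0] far[of 1] p(2,3) m dist_\<sigma>[OF m(1), of 0] dist_\<sigma>[OF m(1), of len]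
      dist_triangle[of "q 0" "q r" "\<sigma> m"] dist_triangle[of "q 0" "q (-r)" "\<sigma> m"]
    by (auto simp: \<sigma>_start \<sigma>_end dist_commute)
  with w have m_w: "0 \<le> m - w" "m + w \<le> len"
    by linarith+
  define v where "v k = m - w + real k * gap" for k :: nat
  have v: "v k \<in> {m - w..m + w}" if "k \<le> N" for k
  proof -
    have "0 \<le> real k * gap" "real k * gap \<le> real N * gap"
      using that gap by (auto intro: mult_right_mono)
    with N show ?thesis
      unfolding v_def atLeastAtMost_iff by linarith
  qed
  have cont: "continuous_on {0..1} (\<lambda>t. foot (p t))"
    by (rule continuous_on_compose2[OF continuous_on_foot p(1)]) auto
  have levels: "v k \<in> {foot (p 0)..foot (p 1)}" if "k \<le> N" for k
    using v[OF that] m_w p(2,3) by (simp add: foot_start foot_end)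
  have v_mono: "v k \<le> v (Suc k)" if "k < N" for k
    using gap by (simp add: v_def algebra_simps)
  obtain t where t: "\<And>k. k \<le> N \<Longrightarrow> t k \<in> {0..1} \<and> foot (p (t k)) = v k"
    and t_mono: "\<And>k. k < N \<Longrightarrow> t k \<le> t (Suc k)"
    using continuous_on_increasing_level_times[where f = "\<lambda>t. foot (p t)" and v = v and N = N,
        OF zero_le_one cont levels v_mono]
    by blast
  have "\<epsilon> * (\<rho> - ?H - w) < dist (p (t k)) (p (t (Suc k)))" if k: "k < N" for k
  proof -
    have tk: "t k \<in> {0..1}" "\<bar>foot (p (t k)) - m\<bar> \<le> w"
      using t[of k] v[of k] k by auto
    have "\<rho> - ?H - w \<le> height (p (t k))"
      using far[OF tk(1)] m dist_\<sigma>[OF m(1) foot_in_segment, of "p (t k)"] tk(2)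
        dist_triangle[of "q 0" "p (t k)" "\<sigma> m"] dist_triangle[of "\<sigma> m" "p (t k)" "\<sigma> (foot (p (t k)))"]
      by (auto simp: height_def dist_commute abs_minus_commute)
    then have "\<epsilon> * (\<rho> - ?H - w) \<le> \<epsilon> * height (p (t k))"
      using \<epsilon> by (intro mult_left_mono) auto
    also have "\<dots> < dist (p (t k)) (p (t (Suc k)))"
      using step_far_from_segment_is_long[OF gap \<epsilon> gap_large r_large m tk(2)] t[of k] t[of "Suc k"] k
      by (simp add: v_def algebra_simps)
    finally show ?thesis .
  qed
  then have "real N * (\<epsilon> * (\<rho> - ?H - w)) \<le> (\<Sum>k<N. dist (p (t k)) (p (t (Suc k))))"
    using sum_mono[of "{..<N}" "\<lambda>_. \<epsilon> * (\<rho> - ?H - w)"] by (simp add: less_imp_le)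
  also have "ereal \<dots> \<le> path_length p"
    using t[of 0] t[of N] t_mono by (intro path_length_ge_sum) auto
  finally show ?thesis
    by simp
qed

lemma avoiding_path_length_quadratic:
  fixes p :: "real \<Rightarrow> 'a"
  assumes p: "continuous_on {0..1} p" "p 0 = q r" "p 1 = q (-r)"
    and avoid: "p ` {0..1} \<inter> ball (q 0) \<rho> = {}"
    and gap: "1 \<le> gap" and \<epsilon>: "0 < \<epsilon>" "\<epsilon> \<le> 1/2" "\<epsilon> * gap \<le> 2"
    and gap_large: "morse_gauge q 4 1 + tracking_const q L C < gap / 4"
    and r_large: "morse_gauge q 4 1 + gap / 4 + w + tracking_const q L C < r / L - C"
    and w: "gap \<le> w" "w \<le> \<rho> / 4" and \<rho>: "4 * tracking_const q L C \<le> \<rho>"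
  shows "ereal (\<epsilon> * w * \<rho> / (2 * gap)) \<le> path_length p"
proof -
  let ?H = "tracking_const q L C"
  define N where "N = nat \<lfloor>2 * w / gap\<rfloor>"
  have "0 \<le> 2 * w / gap"
    using w gap by simp
  then have N_eq: "real N = of_int \<lfloor>2 * w / gap\<rfloor>"
    unfolding N_def by simp
  have "real N * gap \<le> 2 * w"
    using of_int_floor_le[of "2 * w / gap"] gap by (simp add: N_eq le_divide_eq)
  moreover have "0 \<le> w" "w \<le> \<rho> - ?H"
    using w \<rho> gap by linarith+
  ultimately have length: "ereal (real N * (\<epsilon> * (\<rho> - ?H - w))) \<le> path_length p"
    using avoiding_path_length[OF p avoid gap \<epsilon> gap_large r_large] by blast
  have N_large: "w / gap \<le> real N"
  proof -
    have "1 \<le> w / gap"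
      using w gap by simp
    moreover have "2 * w / gap - 1 < real N"
      unfolding N_eq by (rule real_of_int_floor_gt_diff_one)
    ultimately show ?thesis by simp
  qed
  have "0 \<le> \<rho>"
    using w gap by simp
  have step: "\<epsilon> * (\<rho> / 2) \<le> \<epsilon> * (\<rho> - ?H - w)"
    using w \<rho> \<epsilon> by (intro mult_left_mono) auto
  have "0 \<le> \<epsilon> * (\<rho> / 2)"
    using \<open>0 \<le> \<rho>\<close> \<epsilon> by simp
  have "\<epsilon> * w * \<rho> / (2 * gap) = (w / gap) * (\<epsilon> * (\<rho> / 2))"
    by (simp add: field_simps)
  also have "\<dots> \<le> real N * (\<epsilon> * (\<rho> - ?H - w))"
    by (rule mult_mono[OF N_large step _ \<open>0 \<le> \<epsilon> * (\<rho> / 2)\<close>]) simp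
  finally have "ereal (\<epsilon> * w * \<rho> / (2 * gap)) \<le> ereal (real N * (\<epsilon> * (\<rho> - ?H - w)))"
    by simp
  then show ?thesis
    using length by (rule order_trans)
qed

end

section \<open>Quadratic divergence\<close>

lemma preceq_square_if_eventually_quadratic:
  assumes \<alpha>: "0 < \<alpha>" and f: "\<And>r. r\<^sub>0 \<le> r \<Longrightarrow> ereal (\<alpha> * r\<^sup>2) \<le> f r"
  shows "preceq (\<lambda>x. ereal (x\<^sup>2)) f"
proof -
  define K where "K = \<bar>r\<^sub>0\<bar> + 1 + 1 / \<alpha>"
  have "0 < 1 / \<alpha>"
    using \<alpha> by simp
  moreover have "K * \<alpha> = (\<bar>r\<^sub>0\<bar> + 1) * \<alpha> + 1"
    using \<alpha> by (simp add: K_def field_simps)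
  ultimately have K: "1 \<le> K" "r\<^sub>0 \<le> K" "1 \<le> K * \<alpha>"
    using \<alpha> abs_ge_self[of r\<^sub>0] unfolding K_def by (linarith, linarith, simp)
  have "ereal (x\<^sup>2) \<le> ereal K * f (K * x + K) + ereal (K * x + K)" if x: "0 \<le> x" for x
  proof -
    define r where "r = K * x + K"
    have "0 \<le> K * x" "x \<le> K * x"
      using K x mult_right_mono[OF K(1) x] by auto
    then have "0 \<le> x" "x \<le> r" "r\<^sub>0 \<le> r"
      using K x by (auto simp: r_def)
    then have "x\<^sup>2 \<le> r\<^sup>2"
      by (intro power_mono) auto
    also have "\<dots> \<le> K * (\<alpha> * r\<^sup>2)"
      using mult_right_mono[OF K(3), of "r\<^sup>2"] by (simp add: mult.assoc)
    finally have "ereal (x\<^sup>2) \<le> ereal K * ereal (\<alpha> * r\<^sup>2)"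
      by simp
    also have "\<dots> \<le> ereal K * f r"
      using f[OF \<open>r\<^sub>0 \<le> r\<close>] K by (intro ereal_mult_left_mono) auto
    also have "\<dots> \<le> ereal K * f r + ereal (K * x + K)"
      using \<open>0 \<le> K * x\<close> K by (intro add_increasing2) auto
    finally show ?thesis
      by (simp add: r_def)
  qed
  with K show ?thesis
    unfolding preceq_def by blast
qed

lemma large_radius_estimates:
  fixes L C \<delta> \<gamma> M H gap r \<rho> :: real
  assumes L: "1 \<le> L" and C: "0 \<le> C" and \<delta>: "0 < \<delta>" and \<gamma>: "0 \<le> \<gamma>" and gap: "0 \<le> gap"
    and \<rho>: "\<delta> * (r / L - C) - \<gamma> \<le> \<rho>" "\<rho> \<le> L * r + C"
    and r: "2 * L * (C + \<gamma> / \<delta>) + 8 * L ^ 3 * gap / \<delta> + 8 * L * \<bar>H\<bar> / \<delta>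
              + 2 * L * (\<bar>M\<bar> + gap + 2 * C + \<bar>H\<bar> + 1) \<le> r"
  shows "\<delta> * r / (2 * L) \<le> \<rho>" and "gap \<le> \<rho> / (4 * L\<^sup>2)" and "4 * H \<le> \<rho>"
    and "\<rho> / (4 * L\<^sup>2) \<le> \<rho> / 4" and "M + gap / 4 + \<rho> / (4 * L\<^sup>2) + H < r / L - C"
proof -
  have L_pos: "0 < L" using L by simp
  have r_ge: "2 * L * (C + \<gamma> / \<delta>) \<le> r" "8 * L ^ 3 * gap / \<delta> \<le> r" "8 * L * \<bar>H\<bar> / \<delta> \<le> r"
      "2 * L * (\<bar>M\<bar> + gap + 2 * C + \<bar>H\<bar> + 1) \<le> r"
    using r L C \<delta> \<gamma> gap
    by (smt (verit, best) divide_nonneg_pos mult_nonneg_nonneg zero_le_power abs_ge_zero)+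
  show \<rho>_ge: "\<delta> * r / (2 * L) \<le> \<rho>"
  proof -
    have "\<delta> * C + \<gamma> = (2 * L * (C + \<gamma> / \<delta>)) * (\<delta> / (2 * L))"
      using \<delta> L_pos by (simp add: field_simps)
    also have "\<dots> \<le> r * (\<delta> / (2 * L))"
      using r_ge(1) \<delta> L_pos by (intro mult_right_mono) auto
    finally have "\<delta> * C + \<gamma> \<le> \<delta> * r / (2 * L)"
      by (simp add: mult.commute)
    moreover have "\<delta> * (r / L - C) - \<gamma> = 2 * (\<delta> * r / (2 * L)) - (\<delta> * C + \<gamma>)"
      using L_pos by (simp add: field_simps)
    ultimately show ?thesis
      using \<rho>(1) by linarith
  qed
  have \<rho>_nonneg: "0 \<le> \<rho>"
    using \<rho>_ge \<delta> L_pos r_ge(1) C \<gamma> by (smt (verit, best) divide_nonneg_pos mult_nonneg_nonneg)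
  have L2: "1 \<le> L\<^sup>2"
    using L by (simp add: one_le_power)
  show "\<rho> / (4 * L\<^sup>2) \<le> \<rho> / 4"
    using L2 \<rho>_nonneg by (intro divide_left_mono) auto
  show "gap \<le> \<rho> / (4 * L\<^sup>2)"
  proof -
    have "4 * L\<^sup>2 * gap = (\<delta> / (2 * L)) * (8 * L ^ 3 * gap / \<delta>)"
      using \<delta> L_pos by (simp add: field_simps power2_eq_square power3_eq_cube)
    also have "\<dots> \<le> \<delta> * r / (2 * L)"
      using mult_left_mono[OF r_ge(2), of "\<delta> / (2 * L)"] \<delta> L_pos by simp
    also have "\<dots> \<le> \<rho>"
      by (rule \<rho>_ge)
    finally show ?thesis
      using L_pos by (subst pos_le_divide_eq) (auto simp: mult_ac)
  qed
  show "4 * H \<le> \<rho>"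
  proof -
    have "4 * \<bar>H\<bar> = (\<delta> / (2 * L)) * (8 * L * \<bar>H\<bar> / \<delta>)"
      using \<delta> L_pos by (simp add: field_simps)
    also have "\<dots> \<le> (\<delta> / (2 * L)) * r"
      using r_ge(3) \<delta> L_pos by (intro mult_left_mono) auto
    finally show ?thesis
      using \<rho>_ge abs_ge_self[of H] by simp
  qed
  show "M + gap / 4 + \<rho> / (4 * L\<^sup>2) + H < r / L - C"
  proof -
    have "\<rho> / (4 * L\<^sup>2) \<le> (L * r + C) / (4 * L\<^sup>2)"
      using \<rho>(2) L_pos by (simp add: divide_right_mono)
    also have "\<dots> = r / L / 4 + C / (4 * L\<^sup>2)"
      using L_pos by (simp add: field_simps power2_eq_square)
    also have "C / (4 * L\<^sup>2) \<le> C / 4"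
      using L2 C by (intro divide_left_mono) auto
    finally have "4 * (\<rho> / (4 * L\<^sup>2)) \<le> r / L + C"
      by simp
    moreover have "2 * (\<bar>M\<bar> + gap + 2 * C + \<bar>H\<bar> + 1) \<le> r / L"
      using r_ge(4) L_pos by (simp add: field_simps)
    moreover have "M + gap / 4 + W + H < X - C"
      if "4 * W \<le> X + C" "2 * (a + gap + 2 * C + b + 1) \<le> X" "M \<le> a" "H \<le> b" "0 \<le> a" "0 \<le> b"
      for W X a b
      using that gap C by (simp add: field_simps)
    ultimately show ?thesis
      by simp
  qed
qed

lemma (in Morse_chord) Div_ge_quadratic:
  fixes \<delta> \<gamma> :: real
  defines "\<rho> \<equiv> \<delta> * min (dist (q 0) (q r)) (dist (q 0) (q (-r))) - \<gamma>"
  assumes \<delta>: "0 < \<delta>" and gap: "1 \<le> gap" and \<epsilon>: "0 < \<epsilon>" "\<epsilon> \<le> 1/2" "\<epsilon> * gap \<le> 2"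
    and gap_large: "morse_gauge q 4 1 + tracking_const q L C < gap / 4"
    and estimates: "\<delta> * r / (2 * L) \<le> \<rho>" "gap \<le> \<rho> / (4 * L\<^sup>2)" "4 * tracking_const q L C \<le> \<rho>"
      "\<rho> / (4 * L\<^sup>2) \<le> \<rho> / 4"
      "morse_gauge q 4 1 + gap / 4 + \<rho> / (4 * L\<^sup>2) + tracking_const q L C < r / L - C"
  shows "ereal (\<epsilon> * \<delta>\<^sup>2 / (32 * L ^ 4 * gap) * r\<^sup>2) \<le> Div q \<gamma> \<delta> r"
proof -
  have "\<epsilon> * \<delta>\<^sup>2 / (32 * L ^ 4 * gap) * r\<^sup>2 = \<epsilon> * (\<delta> * r / (2 * L))\<^sup>2 / (8 * L\<^sup>2 * gap)"
    using L_ge_1 by (simp add: field_simps power2_eq_square power4_eq_xxxx)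
  also have "\<dots> \<le> \<epsilon> * \<rho>\<^sup>2 / (8 * L\<^sup>2 * gap)"
    using estimates(1) \<delta> r_nonneg L_ge_1 \<epsilon> gap
    by (intro divide_right_mono mult_left_mono power_mono) auto
  also have "\<dots> = \<epsilon> * (\<rho> / (4 * L\<^sup>2)) * \<rho> / (2 * gap)"
    using L_ge_1 by (simp add: field_simps power2_eq_square)
  finally have "ereal (\<epsilon> * \<delta>\<^sup>2 / (32 * L ^ 4 * gap) * r\<^sup>2) \<le> path_length p"
    if "continuous_on {0..1} p" "p 0 = q r" "p 1 = q (-r)" "p ` {0..1} \<inter> ball (q 0) \<rho> = {}" for p
    using avoiding_path_length_quadratic[OF that gap \<epsilon> gap_large estimates(5) estimates(2,4,3)]
    by (meson ereal_less_eq(3) order_trans)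
  then show ?thesis
    unfolding Div_def divg_def Let_def \<rho>_def by (auto intro: Inf_greatest)
qed

lemma Div_eventually_ge_quadratic:
  fixes q :: "real \<Rightarrow> 'a::metric_space" and \<gamma> \<delta> :: real
  assumes CAT0: "CAT0_space TYPE('a)" and morse: "morse_quasi_geodesic q"
    and \<delta>: "0 < \<delta>" "\<delta> < 1" and \<gamma>: "0 \<le> \<gamma>"
  shows "\<exists>\<alpha>>0. \<exists>r\<^sub>0. \<forall>r\<ge>r\<^sub>0. ereal (\<alpha> * r\<^sup>2) \<le> Div q \<gamma> \<delta> r"
proof -
  obtain L C where qg: "quasi_geodesic L C UNIV q"
    using morse unfolding morse_quasi_geodesic_def by blast
  then have L: "1 \<le> L" and C: "0 \<le> C"
    unfolding quasi_geodesic_def by auto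
  define M H where "M = morse_gauge q 4 1" and "H = tracking_const q L C"
  define gap where "gap = 4 * (\<bar>M\<bar> + \<bar>H\<bar> + 1)"
  define \<epsilon> where "\<epsilon> = 1 / (2 * gap)"
  define r\<^sub>0 where "r\<^sub>0 = 2 * L * (C + \<gamma> / \<delta>) + 8 * L ^ 3 * gap / \<delta> + 8 * L * \<bar>H\<bar> / \<delta>
                       + 2 * L * (\<bar>M\<bar> + gap + 2 * C + \<bar>H\<bar> + 1)"
  have gap: "4 \<le> gap" "0 \<le> gap" "M + H < gap / 4"
    using abs_ge_self[of M] abs_ge_self[of H] by (auto simp: gap_def)
  have \<epsilon>: "0 < \<epsilon>" "\<epsilon> \<le> 1/2" "\<epsilon> * gap \<le> 2"
    using gap by (auto simp: \<epsilon>_def)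
  have "ereal (\<epsilon> * \<delta>\<^sup>2 / (32 * L ^ 4 * gap) * r\<^sup>2) \<le> Div q \<gamma> \<delta> r" if r: "r\<^sub>0 \<le> r" for r
  proof -
    have r_nonneg: "0 \<le> r"
      using r L C \<delta> \<gamma> gap unfolding r\<^sub>0_def
      by (smt (verit, best) divide_nonneg_pos mult_nonneg_nonneg zero_le_power abs_ge_zero)
    interpret Morse_chord "some_geodesic (q r) (q (-r))" q r L C
      by unfold_locales
        (use CAT0 morse qg r_nonneg geodesic_seg_some_geodesic[OF CAT0_geodesic_space[OF CAT0]] in auto)
    define \<rho> where "\<rho> = \<delta> * min (dist (q 0) (q r)) (dist (q 0) (q (-r))) - \<gamma>"
    have "r / L - C \<le> min (dist (q 0) (q r)) (dist (q 0) (q (-r)))"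
      using q_param_le[of 0 r] q_param_le[of 0 "-r"] r_nonneg L
      by (auto simp: divide_le_eq algebra_simps)
    then have "\<delta> * (r / L - C) - \<gamma> \<le> \<rho>"
      unfolding \<rho>_def using \<delta> by (simp add: mult_left_mono)
    moreover have "\<rho> \<le> L * r + C"
      using q_dist_le[of 0 r] r_nonneg \<delta> \<gamma> unfolding \<rho>_def
      by (smt (verit, best) min.cobounded1 mult_left_le_one_le zero_le_dist)
    ultimately show ?thesis
      using large_radius_estimates[OF L C \<delta>(1) \<gamma> gap(2) _ _ r[unfolded r\<^sub>0_def], of \<rho>] \<delta> gap \<epsilon>
      unfolding \<rho>_def by (intro Div_ge_quadratic) (auto simp: M_def H_def)
  qed
  moreover have "0 < \<epsilon> * \<delta>\<^sup>2 / (32 * L ^ 4 * gap)"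
    using \<epsilon> \<delta> L gap by simp
  ultimately show ?thesis
    by blast
qed

theorem theorem6p4:
  fixes q :: "real \<Rightarrow> 'a::metric_space" and \<gamma> \<delta> :: real
  assumes "CAT0_space TYPE('a)"
    and "morse_quasi_geodesic q"
    and "0 < \<delta>" and "\<delta> < 1" and "0 \<le> \<gamma>"
  shows "preceq (\<lambda>x. ereal (x ^ 2)) (Div q \<gamma> \<delta>)"
  using Div_eventually_ge_quadratic[OF assms] preceq_square_if_eventually_quadratic by blast

end
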